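(* Let $\mathbb{G}$ be an $E$-group such that $\mathbb{G}$ is compatible with the Cayley graph $\mathrm{Cay}(\mathbb{G}[\alpha])$ for every $\alpha\subsetneq E$. Then $\mathbb{G}$ is $3$-acyclic.
   Context: Let $E$ be a finite set. An $E$-group is a group $\mathbb{G}$ together with an inclusion $E\subseteq\mathbb{G}$ such that $E$ generates $\mathbb{G}$ and every $e\in E$ satisfies $e\neq1$, $e^2=1$. For $w=e_1\cdots e_n\in E^*$, $[w]_{\mathbb{G}}=e_1\cdots e_n$. For $\alpha\subseteq E$, $\mathbb{G}[\alpha]$ is the subgroup generated by $\alpha$. An $E$-graph is $\mathbb{H}=(V,(R_e)_{e\in E})$ with each $R_e\subseteq V\times V$ symmetric and every vertex having at most one $R_e$-neighbour. For $e\in E$, $\pi_e$ is the permutation of $V$ swapping each vertex with its $R_e$-neighbour if it has one and fixing it otherwise; for $w=e_1\cdots e_n$, $\pi_w=\pi_{e_n}\circ\cdots\circ\pi_{e_1}$. $\mathbb{G}$ is compatible with $\mathbb{H}$ if $[w]_{\mathbb{G}}=1$ implies $\pi_w=\mathrm{id}_V$ for all $w\in E^*$. $\mathrm{Cay}(\mathbb{G}[\alpha])$ is the $E$-graph on vertex set $\mathbb{G}[\alpha]$ with $R_e=\{(g,ge):g\in\mathbb{G}[\alpha]\}$ for $e\in\alpha$ and $R_e=\emptyset$ for $e\notin\alpha$. A coset cycle of length $n\ge2$ in $\mathbb{G}$ is a cyclically indexed family $(g_i,\alpha_i)_{i\in\mathbb{Z}_n}$ with $g_i\in\mathbb{G}$,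 $\alpha_i\subseteq E$, such that for all $i$: $g_{i+1}\in g_i\mathbb{G}[\alpha_i]$ and $g_i\mathbb{G}[\alpha_i\cap\alpha_{i-1}]\cap g_{i+1}\mathbb{G}[\alpha_i\cap\alpha_{i+1}]=\emptyset$. $\mathbb{G}$ is $N$-acyclic if it admits no coset cycle of length $n$ with $2\le n\le N$. *)

theory Defs
  imports "HOL-Algebra.Coset" "HOL-Algebra.Generated_Groups"
begin

definition E_group :: "('a, 'b) monoid_scheme \<Rightarrow> 'a set \<Rightarrow> bool" where
  "E_group G E \<longleftrightarrow> group G \<and> finite E \<and> E \<subseteq> carrier G \<and> generate G E = carrier G
     \<and> (\<forall>e\<in>E. e \<noteq> \<one>\<^bsub>G\<^esub> \<and> e \<otimes>\<^bsub>G\<^esub> e = \<one>\<^bsub>G\<^esub>)"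

definition word_eval :: "('a, 'b) monoid_scheme \<Rightarrow> 'a list \<Rightarrow> 'a" where
  "word_eval G w = foldr (\<lambda>e x. e \<otimes>\<^bsub>G\<^esub> x) w \<one>\<^bsub>G\<^esub>"

text \<open>E-graph given by its edge relations R e; pi_e swaps a vertex with its R_e-neighbour if any.\<close>
definition pi_e :: "('e \<Rightarrow> ('v \<times> 'v) set) \<Rightarrow> 'e \<Rightarrow> 'v \<Rightarrow> 'v" where
  "pi_e R e v = (if \<exists>u. (v, u) \<in> R e then (THE u. (v, u) \<in> R e) else v)"

definition pi_word :: "('e \<Rightarrow> ('v \<times> 'v) set) \<Rightarrow> 'e list \<Rightarrow> 'v \<Rightarrow> 'v" where
  "pi_word R w = fold (\<lambda>e f. pi_e R e \<circ> f) w id"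

definition compatible :: "('a, 'b) monoid_scheme \<Rightarrow> 'a set \<Rightarrow> 'v set \<Rightarrow> ('a \<Rightarrow> ('v \<times> 'v) set) \<Rightarrow> bool" where
  "compatible G E V R \<longleftrightarrow>
     (\<forall>w \<in> lists E. word_eval G w = \<one>\<^bsub>G\<^esub> \<longrightarrow> (\<forall>v\<in>V. pi_word R w v = v))"

definition cayley_R :: "('a, 'b) monoid_scheme \<Rightarrow> 'a set \<Rightarrow> 'a \<Rightarrow> ('a \<times> 'a) set" where
  "cayley_R G \<alpha> e = (if e \<in> \<alpha> then {(g, g \<otimes>\<^bsub>G\<^esub> e) | g. g \<in> generate G \<alpha>} else {})"

definition coset_cycle :: "('a, 'b) monoid_scheme \<Rightarrow> 'a set \<Rightarrow> nat \<Rightarrow> (nat \<Rightarrow> 'a) \<Rightarrow> (nat \<Rightarrow> 'a set) \<Rightarrow> bool" where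
  "coset_cycle G E n g \<alpha> \<longleftrightarrow> 2 \<le> n \<and>
     (\<forall>i<n. g i \<in> carrier G \<and> \<alpha> i \<subseteq> E
        \<and> g ((i + 1) mod n) \<in> g i <#\<^bsub>G\<^esub> generate G (\<alpha> i)
        \<and> (g i <#\<^bsub>G\<^esub> generate G (\<alpha> i \<inter> \<alpha> ((i + n - 1) mod n)))
          \<inter> (g ((i + 1) mod n) <#\<^bsub>G\<^esub> generate G (\<alpha> i \<inter> \<alpha> ((i + 1) mod n))) = {})"

definition N_acyclic :: "('a, 'b) monoid_scheme \<Rightarrow> 'a set \<Rightarrow> nat \<Rightarrow> bool" where
  "N_acyclic G E N \<longleftrightarrow> \<not> (\<exists>n g \<alpha>. 2 \<le> n \<and> n \<le> N \<and> coset_cycle G E n g \<alpha>)"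

end

theory Submission
  imports Defs
begin

text \<open>
  Compatibility of \<open>\<GG>\<close> with \<open>Cay(\<GG>[\<alpha>])\<close> says precisely that deleting all letters
  outside \<open>\<alpha>\<close> from a relator word leaves a relator. A coset cycle of length at most 3 gives
  \<open>c \<in> b\<GG>[\<alpha>]\<close>, \<open>a \<in> c\<GG>[\<gamma>]\<close>, \<open>b \<in> a\<GG>[\<beta>]\<close> (with \<open>a = c\<close> for length 2), hence a relation
  \<open>h m k = 1\<close> with \<open>h \<in> \<GG>[\<alpha>]\<close>, \<open>m \<in> \<GG>[\<gamma>]\<close>, \<open>k \<in> \<GG>[\<beta>]\<close>. Projecting it to \<open>\<alpha>\<close>
  keeps \<open>h\<close> and moves \<open>m\<close>, \<open>k\<close> into \<open>\<GG>[\<alpha> \<inter> \<gamma>]\<close>, \<open>\<GG>[\<alpha> \<inter> \<beta>]\<close>, which produces a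
  common element of \<open>b\<GG>[\<alpha> \<inter> \<beta>]\<close> and \<open>c\<GG>[\<alpha> \<inter> \<gamma>]\<close>, contradicting the cycle condition.
\<close>

lemma word_eval_Nil [simp]: "word_eval G [] = \<one>\<^bsub>G\<^esub>"
  by (simp add: word_eval_def)

lemma word_eval_Cons [simp]: "word_eval G (e # w) = e \<otimes>\<^bsub>G\<^esub> word_eval G w"
  by (simp add: word_eval_def)

context group
begin

lemma word_eval_closed: "set w \<subseteq> carrier G \<Longrightarrow> word_eval G w \<in> carrier G"
  by (induction w) auto

lemma word_eval_append:
  "set u \<subseteq> carrier G \<Longrightarrow> set v \<subseteq> carrier G \<Longrightarrow>
    word_eval G (u @ v) = word_eval G u \<otimes> word_eval G v"
  by (induction u) (auto simp: word_eval_closed m_assoc)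

lemma word_eval_in_generate:
  "S \<subseteq> carrier G \<Longrightarrow> set w \<subseteq> S \<Longrightarrow> word_eval G w \<in> generate G S"
  by (induction w) (auto intro: generate.one generate.incl generate.eng)

text \<open>For a set of involutions no inverse letters are needed.\<close>
lemma generate_involutions_eq_words:
  assumes S: "S \<subseteq> carrier G" "\<And>s. s \<in> S \<Longrightarrow> s \<otimes> s = \<one>"
  shows "generate G S = word_eval G ` lists S"
proof
  show "generate G S \<subseteq> word_eval G ` lists S"
  proof
    fix h assume "h \<in> generate G S"
    then show "h \<in> word_eval G ` lists S"
    proof (induction rule: generate.induct)
      case one
      show ?case by (rule image_eqI[of _ _ "[]"]) auto
    next
      case (incl s)
      then show ?case using S by (intro image_eqI[of _ _ "[s]"]) auto
    next
      case (inv s)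
      then have "inv s = s" using S by (intro inv_equality) auto
      then show ?case using inv S by (intro image_eqI[of _ _ "[s]"]) auto
    next
      case (eng h1 h2)
      then obtain w1 w2 where "w1 \<in> lists S" "w2 \<in> lists S" "h1 = word_eval G w1" "h2 = word_eval G w2"
        by blast
      moreover have "set w1 \<subseteq> carrier G" "set w2 \<subseteq> carrier G"
        using calculation S by auto
      ultimately show ?case by (intro image_eqI[of _ _ "w1 @ w2"]) (auto simp: word_eval_append)
    qed
  qed
  show "word_eval G ` lists S \<subseteq> generate G S"
    using S(1) by (auto intro!: word_eval_in_generate)
qed

end

lemma fold_comp_id:
  fixes g :: "'a \<Rightarrow> 'a"
  shows "fold (\<lambda>e f. p e \<circ> f) w g = fold (\<lambda>e f. p e \<circ> f) w id \<circ> g"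
proof (induction w arbitrary: g)
  case (Cons e w)
  show ?case
    using Cons.IH[of "p e \<circ> g"] Cons.IH[of "p e"] by (simp add: comp_assoc)
qed simp

lemma pi_word_Cons: "pi_word R (e # w) = pi_word R w \<circ> pi_e R e"
  unfolding pi_word_def by (simp add: fold_comp_id[of _ _ "pi_e R e"])

context group
begin

lemma pi_e_cayley_R:
  assumes "v \<in> generate G \<alpha>"
  shows "pi_e (cayley_R G \<alpha>) e v = (if e \<in> \<alpha> then v \<otimes> e else v)"
proof (cases "e \<in> \<alpha>")
  case True
  then have "cayley_R G \<alpha> e = {(g, g \<otimes> e) | g. g \<in> generate G \<alpha>}"
    by (simp add: cayley_R_def)
  then have "(v, u) \<in> cayley_R G \<alpha> e \<longleftrightarrow> u = v \<otimes> e" for u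
    using assms by blast
  then show ?thesis
    unfolding pi_e_def using True by simp
qed (simp add: pi_e_def cayley_R_def)

text \<open>A walk in \<open>Cay(\<GG>[\<alpha>])\<close> only follows the letters of \<open>\<alpha>\<close>.\<close>
lemma pi_word_cayley_R:
  assumes "\<alpha> \<subseteq> carrier G" "set w \<subseteq> carrier G" "v \<in> generate G \<alpha>"
  shows "pi_word (cayley_R G \<alpha>) w v = v \<otimes> word_eval G (filter (\<lambda>x. x \<in> \<alpha>) w)"
  using assms(2,3)
proof (induction w arbitrary: v)
  case Nil
  then show ?case using generate_in_carrier[OF assms(1)] by (auto simp: pi_word_def)
next
  case (Cons e w)
  have v: "v \<in> carrier G" using Cons.prems generate_in_carrier[OF assms(1)] by auto
  have "pi_e (cayley_R G \<alpha>) e v \<in> generate G \<alpha>"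
    using Cons.prems by (simp add: pi_e_cayley_R generate.eng generate.incl)
  moreover have "word_eval G (filter (\<lambda>x. x \<in> \<alpha>) w) \<in> carrier G"
    using Cons.prems by (intro word_eval_closed) auto
  ultimately show ?case
    using Cons v by (auto simp: pi_word_Cons pi_e_cayley_R m_assoc)
qed

lemma compatible_cayley_R_iff:
  assumes "E \<subseteq> carrier G" "\<alpha> \<subseteq> E"
  shows "compatible G E (generate G \<alpha>) (cayley_R G \<alpha>) \<longleftrightarrow>
    (\<forall>w \<in> lists E. word_eval G w = \<one> \<longrightarrow> word_eval G (filter (\<lambda>x. x \<in> \<alpha>) w) = \<one>)"
proof -
  let ?p = "filter (\<lambda>x. x \<in> \<alpha>)"
  have closed: "word_eval G (?p w) \<in> carrier G" if "w \<in> lists E" for w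
    using that assms by (intro word_eval_closed) auto
  have pi: "pi_word (cayley_R G \<alpha>) w v = v \<otimes> word_eval G (?p w)"
    if "w \<in> lists E" "v \<in> generate G \<alpha>" for w v
    using that assms by (intro pi_word_cayley_R) auto
  have gen: "generate G \<alpha> \<subseteq> carrier G"
    using assms generate_in_carrier[of \<alpha>] by blast
  show ?thesis unfolding compatible_def
  proof (intro iffI ballI impI)
    fix w assume "\<forall>w\<in>lists E. word_eval G w = \<one> \<longrightarrow>
        (\<forall>v\<in>generate G \<alpha>. pi_word (cayley_R G \<alpha>) w v = v)"
      and w: "w \<in> lists E" "word_eval G w = \<one>"
    then have "pi_word (cayley_R G \<alpha>) w \<one> = \<one>"
      using generate.one by blast
    then show "word_eval G (?p w) = \<one>"
      using pi[OF w(1) generate.one] closed[OF w(1)] by simp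
  next
    fix w v assume filt: "\<forall>w\<in>lists E. word_eval G w = \<one> \<longrightarrow> word_eval G (?p w) = \<one>"
      and w: "w \<in> lists E" "word_eval G w = \<one>" and v: "v \<in> generate G \<alpha>"
    have "v \<in> carrier G"
      using v gen by blast
    then show "pi_word (cayley_R G \<alpha>) w v = v"
      using pi[OF w(1) v] filt w by simp
  qed
qed

lemma compatible_cayley_R_full:
  "E \<subseteq> carrier G \<Longrightarrow> compatible G E (generate G E) (cayley_R G E)"
  by (auto simp: compatible_cayley_R_iff in_lists_conv_set filter_id_conv)

lemma compatible_cayley_R_project:
  assumes E: "E \<subseteq> carrier G" "\<And>e. e \<in> E \<Longrightarrow> e \<otimes> e = \<one>"
    and sub: "\<alpha> \<subseteq> E" "\<beta> \<subseteq> E" "\<gamma> \<subseteq> E"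
    and comp: "compatible G E (generate G \<alpha>) (cayley_R G \<alpha>)"
    and h: "h \<in> generate G \<alpha>" and m: "m \<in> generate G \<gamma>" and k: "k \<in> generate G \<beta>"
    and rel: "h \<otimes> m \<otimes> k = \<one>"
  shows "\<exists>m' \<in> generate G (\<alpha> \<inter> \<gamma>). \<exists>k' \<in> generate G (\<alpha> \<inter> \<beta>). h \<otimes> m' \<otimes> k' = \<one>"
proof -
  have words: "generate G S = word_eval G ` lists S" if "S \<subseteq> E" for S
    using that E by (intro generate_involutions_eq_words) auto
  obtain u v t where u: "u \<in> lists \<alpha>" "h = word_eval G u"
    and v: "v \<in> lists \<gamma>" "m = word_eval G v" and t: "t \<in> lists \<beta>" "k = word_eval G t"
    using h m k words[OF sub(1)] words[OF sub(3)] words[OF sub(2)] by blast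
  let ?p = "filter (\<lambda>x. x \<in> \<alpha>)"
  have carr: "set u \<subseteq> carrier G" "set v \<subseteq> carrier G" "set t \<subseteq> carrier G"
    using u v t sub E by auto
  have "word_eval G (u @ v @ t) = \<one>"
    using rel u v t carr by (simp add: word_eval_append word_eval_closed m_assoc)
  moreover have "u @ v @ t \<in> lists E"
    using u v t sub by auto
  ultimately have "word_eval G (?p (u @ v @ t)) = \<one>"
    using comp compatible_cayley_R_iff[OF E(1) sub(1)] by blast
  moreover have "?p u = u"
    using u by (auto simp: filter_id_conv)
  moreover have "set (?p v) \<subseteq> carrier G" "set (?p t) \<subseteq> carrier G"
    using carr by auto
  ultimately have "h \<otimes> word_eval G (?p v) \<otimes> word_eval G (?p t) = \<one>"
    using u carr by (simp add: word_eval_append word_eval_closed m_assoc)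
  moreover have "word_eval G (?p v) \<in> generate G (\<alpha> \<inter> \<gamma>)" "word_eval G (?p t) \<in> generate G (\<alpha> \<inter> \<beta>)"
    using v t sub E by (auto intro!: word_eval_in_generate)
  ultimately show ?thesis by blast
qed

lemma compatible_coset_triangle_meet:
  assumes E: "E \<subseteq> carrier G" "\<And>e. e \<in> E \<Longrightarrow> e \<otimes> e = \<one>"
    and sub: "\<alpha> \<subseteq> E" "\<beta> \<subseteq> E" "\<gamma> \<subseteq> E"
    and comp: "compatible G E (generate G \<alpha>) (cayley_R G \<alpha>)"
    and a: "a \<in> carrier G"
    and ab: "b \<in> a <# generate G \<beta>" and bc: "c \<in> b <# generate G \<alpha>"
    and ca: "a \<in> c <# generate G \<gamma>"
  shows "(b <# generate G (\<alpha> \<inter> \<beta>)) \<inter> (c <# generate G (\<alpha> \<inter> \<gamma>)) \<noteq> {}"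
proof -
  have gen_carrier: "generate G S \<subseteq> carrier G" if "S \<subseteq> E" for S
    using that E generate_in_carrier[of S] by blast
  obtain k where k: "k \<in> generate G \<beta>" "b = a \<otimes> k" using ab by (auto simp: l_coset_def)
  obtain h where h: "h \<in> generate G \<alpha>" "c = b \<otimes> h" using bc by (auto simp: l_coset_def)
  obtain m where m: "m \<in> generate G \<gamma>" "a = c \<otimes> m" using ca by (auto simp: l_coset_def)
  have carr: "h \<in> carrier G" "m \<in> carrier G" "k \<in> carrier G"
    using h(1) k(1) m(1) sub gen_carrier by blast+
  then have b: "b \<in> carrier G"
    using k(2) a by simp
  have "b = a \<otimes> k" by (fact k(2))
  also have "\<dots> = (b \<otimes> h) \<otimes> m \<otimes> k" unfolding m(2) h(2) ..
  also have "\<dots> = b \<otimes> (h \<otimes> m \<otimes> k)" using b carr by (simp add: m_assoc)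
  finally have "b = b \<otimes> (h \<otimes> m \<otimes> k)" .
  then have "h \<otimes> m \<otimes> k = \<one>"
    using l_cancel_one'[OF b, of "h \<otimes> m \<otimes> k"] carr by blast
  then obtain m' k' where m': "m' \<in> generate G (\<alpha> \<inter> \<gamma>)" and k': "k' \<in> generate G (\<alpha> \<inter> \<beta>)"
    and rel': "h \<otimes> m' \<otimes> k' = \<one>"
    using compatible_cayley_R_project[OF E sub comp h(1) m(1) k(1)] by blast
  have carr': "m' \<in> carrier G" "k' \<in> carrier G"
    using m' k' sub gen_carrier by blast+
  have "inv k' = h \<otimes> m'"
    using inv_equality[OF rel'] carr carr' by simp
  then have "c \<otimes> m' = b \<otimes> inv k'"
    using h(2) b carr carr' by (simp add: m_assoc)
  moreover have "inv k' \<in> generate G (\<alpha> \<inter> \<beta>)"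
    using k' sub E by (intro generate_m_inv_closed) auto
  ultimately show ?thesis
    using m' by (auto simp: l_coset_def)
qed

lemma no_coset_cycle_le_3:
  assumes E: "E \<subseteq> carrier G" "\<And>e. e \<in> E \<Longrightarrow> e \<otimes> e = \<one>"
    and comp: "\<And>\<alpha>. \<alpha> \<subseteq> E \<Longrightarrow> compatible G E (generate G \<alpha>) (cayley_R G \<alpha>)"
    and cycle: "coset_cycle G E n g \<alpha>" and n: "n \<le> 3"
  shows False
proof -
  have two: "2 \<le> n" and n_cases: "n = 2 \<or> n = 3"
    using cycle n by (auto simp: coset_cycle_def)
  have step: "\<alpha> i \<subseteq> E" "g i \<in> carrier G" "g ((i + 1) mod n) \<in> g i <# generate G (\<alpha> i)"
    if "i < n" for i
    using cycle that by (auto simp: coset_cycle_def)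
  have disjoint: "(g 0 <# generate G (\<alpha> 0 \<inter> \<alpha> (n - 1))) \<inter> (g 1 <# generate G (\<alpha> 0 \<inter> \<alpha> 1)) = {}"
    using cycle two by (auto simp: coset_cycle_def dest!: spec[of _ 0])
  have self: "x \<in> x <# generate G S" if "x \<in> carrier G" for x S
    using that generate.one by (force simp: l_coset_def)
  note triangle = compatible_coset_triangle_meet[OF E _ _ _ comp]
  from n_cases show False
  proof
    assume n2: "n = 2"
    have idx: "(0 + 1) mod n = 1" "(1 + 1) mod n = 0" and lt: "0 < n" "1 < n"
      using n2 by simp_all
    have "(g 0 <# generate G (\<alpha> 0 \<inter> \<alpha> 1)) \<inter> (g 1 <# generate G (\<alpha> 0 \<inter> \<alpha> 1)) \<noteq> {}"
      using triangle[of "\<alpha> 0" "\<alpha> 1" "\<alpha> 1" "g 1" "g 0" "g 1"] self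
        step[OF lt(1), unfolded idx] step[OF lt(2), unfolded idx] by blast
    then show False
      using disjoint n2 by (simp add: Int_commute)
  next
    assume n3: "n = 3"
    have idx: "(0 + 1) mod n = 1" "(1 + 1) mod n = 2" "(2 + 1) mod n = 0"
      and lt: "0 < n" "1 < n" "2 < n"
      using n3 by simp_all
    have "(g 0 <# generate G (\<alpha> 0 \<inter> \<alpha> 2)) \<inter> (g 1 <# generate G (\<alpha> 0 \<inter> \<alpha> 1)) \<noteq> {}"
      using triangle[of "\<alpha> 0" "\<alpha> 2" "\<alpha> 1" "g 2" "g 0" "g 1"]
        step[OF lt(1), unfolded idx] step[OF lt(2), unfolded idx] step[OF lt(3), unfolded idx] by blast
    then show False
      using disjoint n3 by simp
  qed
qed

end

theorem mainTheorem6: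
  fixes G :: "('a, 'b) monoid_scheme" and E :: "'a set"
  assumes "E_group G E"
    and "\<forall>\<alpha>. \<alpha> \<subset> E \<longrightarrow> compatible G E (generate G \<alpha>) (cayley_R G \<alpha>)"
  shows "N_acyclic G E 3"
proof -
  interpret group G
    using assms(1) by (simp add: E_group_def)
  have E: "E \<subseteq> carrier G" "\<And>e. e \<in> E \<Longrightarrow> e \<otimes>\<^bsub>G\<^esub> e = \<one>\<^bsub>G\<^esub>"
    using assms(1) by (auto simp: E_group_def)
  have "compatible G E (generate G \<alpha>) (cayley_R G \<alpha>)" if "\<alpha> \<subseteq> E" for \<alpha>
    using that assms(2) compatible_cayley_R_full[OF E(1)] by (cases "\<alpha> = E") auto
  then show ?thesis
    unfolding N_acyclic_def using no_coset_cycle_le_3[OF E] by blast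
qed

end
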